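(* For every $k\in\mathbb N$, the element $xC_ky$ (free product) belongs to $U$, the subalgebra of the $q$-shuffle algebra $(\mathbb V,\star)$ generated by $x$ and $y$.
   Context: $\mathbb F$ is a field of characteristic zero and $q\in\mathbb F$ is nonzero and not a root of unity; $[n]_q=(q^n-q^{-n})/(q-q^{-1})$. $\mathbb V$ is the free algebra on noncommuting letters $x,y$; a word is a product of letters (the empty word is $1$), and words form a basis. The $q$-shuffle product $\star$ on $\mathbb V$ is the bilinear product with $1\star v=v\star 1=v$ and, for nontrivial words $u=u_1\cdots u_r$, $v=v_1\cdots v_s$ (letters $u_i,v_j$), $u\star v=u_1\bigl((u_2\cdots u_r)\star v\bigr)+v_1\bigl(u\star(v_2\cdots v_s)\bigr)q^{(u_1,v_1)+(u_2,v_1)+\cdots+(u_r,v_1)}$, where juxtaposition is concatenation and $(x,x)=(y,y)=2$, $(x,y)=(y,x)=-2$. Set $\overline x=1$, $\overline y=-1$. A word $u_1\cdots u_n$ is Catalan if $\overline u_1+\cdots+\overline u_i\ge0$ for $1\le i\le n-1$ and $=0$ for $i=n$. For $n\in\mathbb N$, $C_n=\sum u_1u_2\cdots u_{2n}\,[1]_q[1+\overline u_1]_q[1+\overline u_1+\overline u_2]_q\cdots[1+\overline u_1+\cdots+\overline u_{2n}]_q$, summed over all Catalan words of length $2n$ (so $C_0=1$). *)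

theory Defs
  imports Main "HOL-Library.Poly_Mapping"
begin

datatype letter = X | Y

type_synonym 'f vec = "letter list \<Rightarrow>\<^sub>0 'f"

definition lbar :: "letter \<Rightarrow> int" where
  "lbar a = (if a = X then 1 else -1)"

definition lpair :: "letter \<Rightarrow> letter \<Rightarrow> int" where
  "lpair a b = (if a = b then 2 else -2)"

definition qint :: "'f::field \<Rightarrow> int \<Rightarrow> 'f" where
  "qint q n = (q powi n - q powi (-n)) / (q - inverse q)"

definition smul :: "'f::field \<Rightarrow> 'f vec \<Rightarrow> 'f vec" where
  "smul c p = Poly_Mapping.map (\<lambda>a. c * a) p"

definition lcons :: "letter \<Rightarrow> 'f::field vec \<Rightarrow> 'f vec" where
  "lcons a p = (\<Sum>w\<in>Poly_Mapping.keys p. Poly_Mapping.single (a # w) (Poly_Mapping.lookup p w))"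

fun wshuffle :: "'f::field \<Rightarrow> letter list \<Rightarrow> letter list \<Rightarrow> 'f vec" where
  "wshuffle q [] v = Poly_Mapping.single v 1"
| "wshuffle q (a # u) [] = Poly_Mapping.single (a # u) 1"
| "wshuffle q (a # u) (b # v) =
     lcons a (wshuffle q u (b # v))
     + smul (q powi (\<Sum>c\<leftarrow>a # u. lpair c b)) (lcons b (wshuffle q (a # u) v))"

definition qshuffle :: "'f::field \<Rightarrow> 'f vec \<Rightarrow> 'f vec \<Rightarrow> 'f vec" where
  "qshuffle q f g = (\<Sum>u\<in>Poly_Mapping.keys f. \<Sum>v\<in>Poly_Mapping.keys g.
      smul (Poly_Mapping.lookup f u * Poly_Mapping.lookup g v) (wshuffle q u v))"

inductive_set Ualg :: "'f::field \<Rightarrow> 'f vec set" for q where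
  one: "Poly_Mapping.single [] 1 \<in> Ualg q"
| genx: "Poly_Mapping.single [X] 1 \<in> Ualg q"
| geny: "Poly_Mapping.single [Y] 1 \<in> Ualg q"
| add: "f \<in> Ualg q \<Longrightarrow> g \<in> Ualg q \<Longrightarrow> f + g \<in> Ualg q"
| smul: "f \<in> Ualg q \<Longrightarrow> smul c f \<in> Ualg q"
| mult: "f \<in> Ualg q \<Longrightarrow> g \<in> Ualg q \<Longrightarrow> qshuffle q f g \<in> Ualg q"

definition catalan :: "letter list \<Rightarrow> bool" where
  "catalan w \<longleftrightarrow> (\<forall>i\<in>{1..<length w}. (\<Sum>j<i. lbar (w ! j)) \<ge> 0)
                 \<and> (\<Sum>j<length w. lbar (w ! j)) = 0"

definition catcoeff :: "'f::field \<Rightarrow> letter list \<Rightarrow> 'f" where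
  "catcoeff q w = (\<Prod>i\<in>{0..length w}. qint q (1 + (\<Sum>j<i. lbar (w ! j))))"

definition Cat :: "'f::field \<Rightarrow> nat \<Rightarrow> 'f vec" where
  "Cat q n = (\<Sum>w\<in>{w. length w = 2 * n \<and> catalan w}.
               Poly_Mapping.single w (catcoeff q w))"

definition xvy :: "'f::field vec \<Rightarrow> 'f vec" where
  "xvy p = (\<Sum>w\<in>Poly_Mapping.keys p. Poly_Mapping.single (X # w @ [Y]) (Poly_Mapping.lookup p w))"

end

theory Submission
  imports Defs
begin

text \<open>Work with arbitrary series, i.e. functions from words to the field; on them the q-shuffle
  can be computed one letter at a time.  Let \<open>E\<^sub>h\<close> weigh each word as a lattice path from height
  \<open>h\<close> down to \<open>0\<close>, so that \<open>E\<^sub>0\<close> is the sum of all \<open>C\<^sub>n\<close>, and put \<open>A = x E\<^sub>0\<close> and \<open>P = x E\<^sub>0 y\<close>.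
  Induction on words gives three q-commutator identities
  \<^item> \<open>(q - q\<^sup>-\<^sup>1) (A - x) = x \<star> P - P \<star> x\<close>,
  \<^item> \<open>(q - q\<^sup>-\<^sup>1) (E\<^sub>0 - 1) = q\<^sup>2 A \<star> y - y \<star> A\<close>,
  \<^item> \<open>(q - q\<^sup>-\<^sup>1) N E\<^sub>0 = P' \<star> E\<^sub>0 - E\<^sub>0 \<star> P''\<close>,

  where \<open>N\<close> multiplies each word by its number of \<open>x\<close>'s and \<open>P'\<close>, \<open>P''\<close> weight the words of \<open>P\<close>
  by \<open>q\<^sup>2\<close>, resp. \<open>q\<^sup>-\<^sup>2\<close>, to that number.  The q-shuffle is graded by the number of \<open>x\<close>'s.  In
  degree \<open>k + 1\<close> the first two identities express \<open>A\<close> and then \<open>E\<^sub>0\<close> through the degree-\<open>k\<close> part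
  of \<open>P\<close>, and the third expresses \<open>(q - q\<^sup>-\<^sup>1) [2k+2]\<^sub>q\<close> times the degree-\<open>(k+1)\<close> part of \<open>P\<close>
  through that of \<open>E\<^sub>0\<close> and products of lower parts.  As \<open>[n]\<^sub>q \<noteq> 0\<close>, induction on \<open>k\<close> puts all
  homogeneous parts of \<open>E\<^sub>0\<close> and \<open>P\<close> into \<open>U\<close>; that of \<open>P\<close> in degree \<open>k + 1\<close> is \<open>x C\<^sub>k y\<close>.\<close>

section \<open>The q-shuffle product of series\<close>

type_synonym 'f series = "letter list \<Rightarrow> 'f"

definition lderiv :: "letter \<Rightarrow> 'f series \<Rightarrow> 'f series" where
  "lderiv a f = (\<lambda>w. f (a # w))"

lemma lderiv_apply [simp]: "lderiv a f w = f (a # w)"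
  by (simp add: lderiv_def)

definition twist :: "'f::field \<Rightarrow> letter \<Rightarrow> 'f series \<Rightarrow> 'f series" where
  "twist q a f = (\<lambda>w. q powi (\<Sum>d\<leftarrow>w. lpair d a) * f w)"

text \<open>The coefficient of \<open>a w\<close> in \<open>f \<star> g\<close>: the letter \<open>a\<close> comes either from the word of \<open>f\<close> or
  from the word of \<open>g\<close>, and in the second case it has been moved past the whole word of \<open>f\<close>.\<close>

fun qstar :: "'f::field \<Rightarrow> 'f series \<Rightarrow> 'f series \<Rightarrow> 'f series" where
  "qstar q f g [] = f [] * g []"
| "qstar q f g (a # w) = qstar q (lderiv a f) g w + qstar q (twist q a f) (lderiv a g) w"

lemma qstar_linear_left:
  "qstar q (\<lambda>w. c * f1 w + d * f2 w) g w = c * qstar q f1 g w + d * qstar q f2 g w"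
proof (induction w arbitrary: f1 f2 g)
  case (Cons a w)
  have "lderiv a (\<lambda>w. c * f1 w + d * f2 w) = (\<lambda>w. c * lderiv a f1 w + d * lderiv a f2 w)"
    "twist q a (\<lambda>w. c * f1 w + d * f2 w) = (\<lambda>w. c * twist q a f1 w + d * twist q a f2 w)"
    by (simp_all add: lderiv_def twist_def algebra_simps)
  then show ?case by (simp add: Cons.IH algebra_simps del: lderiv_apply)
qed (simp add: algebra_simps)

lemma qstar_linear_right:
  "qstar q f (\<lambda>w. c * g1 w + d * g2 w) w = c * qstar q f g1 w + d * qstar q f g2 w"
proof (induction w arbitrary: f g1 g2)
  case (Cons a w)
  have "lderiv a (\<lambda>w. c * g1 w + d * g2 w) = (\<lambda>w. c * lderiv a g1 w + d * lderiv a g2 w)"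
    by (simp add: lderiv_def)
  then show ?case by (simp add: Cons.IH algebra_simps del: lderiv_apply)
qed (simp add: algebra_simps)

lemma qstar_scale_left [simp]: "qstar q (\<lambda>w. c * f w) g w = c * qstar q f g w"
  and qstar_scale_right [simp]: "qstar q f (\<lambda>w. c * g w) w = c * qstar q f g w"
  and qstar_add_left [simp]: "qstar q (\<lambda>w. f1 w + f2 w) g w = qstar q f1 g w + qstar q f2 g w"
  and qstar_add_right [simp]: "qstar q f (\<lambda>w. g1 w + g2 w) w = qstar q f g1 w + qstar q f g2 w"
  and qstar_zero_left [simp]: "qstar q (\<lambda>w. 0) g w = 0"
  and qstar_zero_right [simp]: "qstar q f (\<lambda>w. 0) w = 0"
  using qstar_linear_left[of q c f 0 f g w] qstar_linear_right[of q f c g 0 g w]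
    qstar_linear_left[of q 1 f1 1 f2 g w] qstar_linear_right[of q f 1 g1 1 g2 w]
    qstar_linear_left[of q 0 f 0 f g w] qstar_linear_right[of q f 0 g 0 g w]
  by simp_all

lemma qstar_sum_left:
  "finite S \<Longrightarrow> qstar q (\<lambda>w. \<Sum>i\<in>S. F i w) g w = (\<Sum>i\<in>S. qstar q (F i) g w)"
  by (induction S rule: finite_induct) simp_all

lemma qstar_sum_right:
  "finite S \<Longrightarrow> qstar q f (\<lambda>w. \<Sum>i\<in>S. G i w) w = (\<Sum>i\<in>S. qstar q f (G i) w)"
  by (induction S rule: finite_induct) simp_all

definition delta :: "letter list \<Rightarrow> 'f::zero_neq_one series" where
  "delta u = (\<lambda>w. if w = u then 1 else 0)"

lemma delta_same [simp]: "delta u u = 1"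
  and delta_Cons_Cons [simp]: "delta (a # u) (b # w) = (if a = b then delta u w else 0)"
  and delta_Nil_Cons [simp]: "delta [] (b # w) = 0"
  by (simp_all add: delta_def)

lemma lderiv_delta_Nil [simp]: "lderiv a (delta []) = (\<lambda>w. 0)"
  and lderiv_delta_Cons [simp]: "lderiv b (delta (a # u)) = (if a = b then delta u else (\<lambda>w. 0))"
  by (auto simp: lderiv_def delta_def)

lemma twist_delta [simp]: "twist q a (delta u) = (\<lambda>w. q powi (\<Sum>d\<leftarrow>u. lpair d a) * delta u w)"
  by (auto simp: twist_def delta_def)

lemma qstar_delta_Nil_left [simp]: "qstar q (delta []) f w = f w"
  by (induction w arbitrary: f) simp_all

lemma qstar_delta_Nil_right [simp]: "qstar q f (delta []) w = f w"
  by (induction w arbitrary: f) simp_all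

lemma lookup_smul [simp]: "Poly_Mapping.lookup (smul c p) w = c * Poly_Mapping.lookup p w"
  by (simp add: smul_def Poly_Mapping.map.rep_eq when_def)

lemma lookup_lcons [simp]:
  "Poly_Mapping.lookup (lcons a p) [] = 0"
  "Poly_Mapping.lookup (lcons a p) (b # w) = (if b = a then Poly_Mapping.lookup p w else 0)"
  by (auto simp: lcons_def lookup_sum lookup_single when_def in_keys_iff)

lemma lookup_single_one [simp]: "Poly_Mapping.lookup (Poly_Mapping.single u (1::'f::field)) = delta u"
  by (auto simp: lookup_single delta_def when_def)

lemma lookup_eq_sum_delta:
  fixes p :: "'f::field vec"
  shows "Poly_Mapping.lookup p = (\<lambda>w. \<Sum>u\<in>Poly_Mapping.keys p. Poly_Mapping.lookup p u * delta u w)"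
proof
  fix w
  have "(\<Sum>u\<in>Poly_Mapping.keys p. Poly_Mapping.lookup p u * delta u w)
      = (\<Sum>u\<in>Poly_Mapping.keys p. if u = w then Poly_Mapping.lookup p w else 0)"
    by (rule sum.cong) (auto simp: delta_def)
  then show "Poly_Mapping.lookup p w = (\<Sum>u\<in>Poly_Mapping.keys p. Poly_Mapping.lookup p u * delta u w)"
    by (simp add: in_keys_iff)
qed

lemma lookup_wshuffle: "Poly_Mapping.lookup (wshuffle q u v) w = qstar q (delta u) (delta v) w"
proof (induction w arbitrary: u v)
  case Nil
  then show ?case
    by (cases "(q, u, v)" rule: wshuffle.cases) (auto simp: lookup_add delta_def)
next
  case (Cons b w)
  then show ?case
    by (cases "(q, u, v)" rule: wshuffle.cases) (auto simp: lookup_add)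
qed

lemma lookup_qshuffle:
  "Poly_Mapping.lookup (qshuffle q f g) = qstar q (Poly_Mapping.lookup f) (Poly_Mapping.lookup g)"
  (is "?L = ?R")
proof
  fix w
  have "?L w = (\<Sum>u\<in>Poly_Mapping.keys f. \<Sum>v\<in>Poly_Mapping.keys g.
      Poly_Mapping.lookup f u * (Poly_Mapping.lookup g v * qstar q (delta u) (delta v) w))"
    by (simp add: qshuffle_def lookup_sum lookup_wshuffle mult.assoc)
  also have "\<dots> = (\<Sum>u\<in>Poly_Mapping.keys f.
      Poly_Mapping.lookup f u * qstar q (delta u) (Poly_Mapping.lookup g) w)"
    by (subst (2) lookup_eq_sum_delta) (simp add: qstar_sum_right sum_distrib_left)
  also have "\<dots> = ?R w"
    by (subst (2) lookup_eq_sum_delta) (simp add: qstar_sum_left)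
  finally show "?L w = ?R w" .
qed

definition Useries :: "'f::field \<Rightarrow> 'f series set" where
  "Useries q = Poly_Mapping.lookup ` Ualg q"

lemma delta_in_Useries: "delta [] \<in> Useries q" "delta [X] \<in> Useries q" "delta [Y] \<in> Useries q"
  unfolding Useries_def using Ualg.one Ualg.genx Ualg.geny lookup_single_one by force+

lemma Useries_add: "F \<in> Useries q \<Longrightarrow> G \<in> Useries q \<Longrightarrow> (\<lambda>w. F w + G w) \<in> Useries q"
  unfolding Useries_def by (auto intro!: image_eqI[OF _ Ualg.add] simp: lookup_add)

lemma Useries_scale: "F \<in> Useries q \<Longrightarrow> (\<lambda>w. c * F w) \<in> Useries q"
  unfolding Useries_def by (auto intro!: image_eqI[OF _ Ualg.smul])

lemma Useries_qstar: "F \<in> Useries q \<Longrightarrow> G \<in> Useries q \<Longrightarrow> qstar q F G \<in> Useries q"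
  unfolding Useries_def by (auto intro!: image_eqI[OF _ Ualg.mult] simp: lookup_qshuffle)

lemma Useries_diff: "F \<in> Useries q \<Longrightarrow> G \<in> Useries q \<Longrightarrow> (\<lambda>w. F w - G w) \<in> Useries q"
  using Useries_add[OF _ Useries_scale[of G q "-1"], of F] by simp

lemma Useries_zero: "(\<lambda>w. 0) \<in> Useries q"
  using Useries_scale[OF delta_in_Useries(1), where c = 0] by simp

lemma Useries_sum:
  "finite S \<Longrightarrow> (\<And>i. i \<in> S \<Longrightarrow> F i \<in> Useries q) \<Longrightarrow> (\<lambda>w. \<Sum>i\<in>S. F i w) \<in> Useries q"
  by (induction S rule: finite_induct) (simp_all add: Useries_zero Useries_add)

definition height :: "letter list \<Rightarrow> int" where
  "height w = (\<Sum>d\<leftarrow>w. lbar d)"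

definition nX :: "letter list \<Rightarrow> nat" where
  "nX w = length (filter (\<lambda>a. a = X) w)"

lemma lbar_simps [simp]: "lbar X = 1" "lbar Y = -1"
  by (simp_all add: lbar_def)

lemma lpair_simps [simp]: "lpair X X = 2" "lpair Y Y = 2" "lpair X Y = -2" "lpair Y X = -2"
  by (simp_all add: lpair_def)

lemma height_simps [simp]: "height [] = 0" "height (a # w) = lbar a + height w"
  by (simp_all add: height_def)

lemma height_snoc: "height (u @ [a]) = height u + lbar a"
  by (induction u) simp_all

lemma height_conv_nth: "height u = (\<Sum>j<length u. lbar (u ! j))"
  by (simp add: height_def sum_list_sum_nth atLeast0LessThan)

lemma nX_simps [simp]: "nX [] = 0" "nX (X # w) = Suc (nX w)" "nX (Y # w) = nX w"
  by (simp_all add: nX_def)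

lemma nX_snoc: "nX (u @ [a]) = nX u + nX [a]"
  by (simp add: nX_def)

lemma length_nX_height: "int (length u) = 2 * int (nX u) - height u"
proof (induction u)
  case (Cons a u)
  then show ?case by (cases a) simp_all
qed simp

lemma lpair_X_Y: "lpair a X = 2 * lbar a" "lpair a Y = -2 * lbar a"
  by (cases a; simp add: lpair_def)+

lemma lpair_sum_X: "(\<Sum>d\<leftarrow>w. lpair d X) = 2 * height w"
  and lpair_sum_Y: "(\<Sum>d\<leftarrow>w. lpair d Y) = -2 * height w"
  by (induction w) (simp_all add: lpair_X_Y)

definition height_homog :: "int \<Rightarrow> 'f::zero series \<Rightarrow> bool" where
  "height_homog c f \<longleftrightarrow> (\<forall>w. f w \<noteq> 0 \<longrightarrow> height w = c)"

lemma twist_height_homog: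
  assumes "height_homog c f"
  shows "twist q X f = (\<lambda>w. q powi (2 * c) * f w)" "twist q Y f = (\<lambda>w. q powi (-2 * c) * f w)"
  using assms by (auto simp: height_homog_def twist_def lpair_sum_X lpair_sum_Y fun_eq_iff)

definition deg_part :: "nat \<Rightarrow> 'f::zero series \<Rightarrow> 'f series" where
  "deg_part n f = (\<lambda>w. if nX w = n then f w else 0)"

lemma lderiv_deg_part:
  "lderiv X (deg_part 0 f) = (\<lambda>w. 0)"
  "lderiv X (deg_part (Suc n) f) = deg_part n (lderiv X f)"
  "lderiv Y (deg_part n f) = deg_part n (lderiv Y f)"
  by (auto simp: deg_part_def lderiv_def)

lemma twist_deg_part: "twist q a (deg_part n f) = deg_part n (twist q a f)"
  by (auto simp: deg_part_def twist_def)

lemma deg_part_qstar: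
  "deg_part m (qstar q f g) w = (\<Sum>i\<le>m. qstar q (deg_part i f) (deg_part (m - i) g) w)"
proof (induction w arbitrary: m f g)
  case Nil
  then show ?case by (cases m) (auto simp: deg_part_def intro!: sum.neutral)
next
  case (Cons a w)
  show ?case
  proof (cases a)
    case Y
    have "deg_part m (qstar q f g) (Y # w)
        = deg_part m (qstar q (lderiv Y f) g) w + deg_part m (qstar q (twist q Y f) (lderiv Y g)) w"
      by (simp add: deg_part_def del: lderiv_apply)
    also have "\<dots> = (\<Sum>i\<le>m. qstar q (deg_part i f) (deg_part (m - i) g) (Y # w))"
      by (simp add: Cons.IH lderiv_deg_part twist_deg_part sum.distrib del: lderiv_apply)
    finally show ?thesis using Y by simp
  next
    case X
    show ?thesis
    proof (cases m)
      case 0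
      have "deg_part 0 (qstar q f g) (X # w) = 0"
        by (simp add: deg_part_def)
      then show ?thesis using X 0 by (simp add: lderiv_deg_part del: lderiv_apply)
    next
      case (Suc n)
      have "deg_part m (qstar q f g) (X # w)
          = deg_part n (qstar q (lderiv X f) g) w + deg_part n (qstar q (twist q X f) (lderiv X g)) w"
        using Suc by (simp add: deg_part_def del: lderiv_apply)
      also have "\<dots> = (\<Sum>i\<le>n. qstar q (deg_part i (lderiv X f)) (deg_part (n - i) g) w)
          + (\<Sum>i\<le>n. qstar q (deg_part i (twist q X f)) (deg_part (n - i) (lderiv X g)) w)"
        by (simp only: Cons.IH)
      also have "(\<Sum>i\<le>n. qstar q (deg_part i (lderiv X f)) (deg_part (n - i) g) w)
          = (\<Sum>i\<le>Suc n. qstar q (lderiv X (deg_part i f)) (deg_part (Suc n - i) g) w)"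
        by (simp only: sum.atMost_Suc_shift lderiv_deg_part) simp
      also have "(\<Sum>i\<le>n. qstar q (deg_part i (twist q X f)) (deg_part (n - i) (lderiv X g)) w)
          = (\<Sum>i\<le>Suc n. qstar q (twist q X (deg_part i f)) (lderiv X (deg_part (Suc n - i) g)) w)"
        by (auto simp: lderiv_deg_part twist_deg_part Suc_diff_le simp del: lderiv_apply
            intro!: sum.cong)
      finally show ?thesis using X Suc by (simp add: sum.distrib del: lderiv_apply)
    qed
  qed
qed

lemma deg_part_qstar_homog_left:
  assumes "\<And>w. f w \<noteq> 0 \<Longrightarrow> nX w = k"
  shows "deg_part (k + m) (qstar q f g) w = qstar q f (deg_part m g) w"
proof -
  have "deg_part i f = (if i = k then f else (\<lambda>w. 0))" for i
    using assms by (fastforce simp: deg_part_def)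
  then have "(\<Sum>i\<le>k + m. qstar q (deg_part i f) (deg_part (k + m - i) g) w)
      = (\<Sum>i\<le>k + m. if i = k then qstar q f (deg_part m g) w else 0)"
    by (intro sum.cong) auto
  then show ?thesis by (simp add: deg_part_qstar)
qed

lemma deg_part_qstar_homog_right:
  assumes "\<And>w. g w \<noteq> 0 \<Longrightarrow> nX w = k"
  shows "deg_part (m + k) (qstar q f g) w = qstar q (deg_part m f) g w"
proof -
  have "deg_part i g = (if i = k then g else (\<lambda>w. 0))" for i
    using assms by (fastforce simp: deg_part_def)
  then have "(\<Sum>i\<le>m + k. qstar q (deg_part i f) (deg_part (m + k - i) g) w)
      = (\<Sum>i\<le>m + k. if i = m then qstar q (deg_part m f) g w else 0)"
    by (intro sum.cong) auto
  then show ?thesis by (simp add: deg_part_qstar)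
qed

lemma nX_delta: "delta u w \<noteq> 0 \<Longrightarrow> nX w = nX u"
  by (simp add: delta_def split: if_splits)

lemma deg_part_qstar_delta:
  "deg_part (nX u + m) (qstar q (delta u) g) w = qstar q (delta u) (deg_part m g) w"
  "deg_part (m + nX u) (qstar q f (delta u)) w = qstar q (deg_part m f) (delta u) w"
  by (intro deg_part_qstar_homog_left deg_part_qstar_homog_right nX_delta; assumption)+

lemma deg_part_delta_X: "deg_part n (delta [X]) = (if n = 1 then delta [X] else (\<lambda>w. 0))"
  by (auto simp: deg_part_def delta_def fun_eq_iff)

section \<open>Catalan weights\<close>

lemma qint_0 [simp]: "qint q 0 = 0"
  by (simp add: qint_def)

text \<open>\<open>catw q h w\<close> is the weight of \<open>w\<close> read as a lattice path from height \<open>h\<close> to height \<open>0\<close>: a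
  step from height \<open>k\<close> contributes \<open>[1 + k]\<^sub>q\<close>, so paths that reach height \<open>-1\<close> get weight \<open>[0]\<^sub>q = 0\<close>.\<close>

fun catw :: "'f::field \<Rightarrow> int \<Rightarrow> 'f series" where
  "catw q h [] = (if h = 0 then 1 else 0)"
| "catw q h (a # w) = qint q (1 + h) * catw q (h + lbar a) w"

lemma catw_negative [simp]: "h < 0 \<Longrightarrow> catw q h = (\<lambda>w. 0)"
proof
  show "h < 0 \<Longrightarrow> catw q h w = 0" for w
  proof (induction w arbitrary: h)
    case (Cons a w)
    then show ?case by (cases "h = -1") (auto simp: lbar_def)
  qed simp
qed

lemma lderiv_catw [simp]: "lderiv a (catw q h) = (\<lambda>w. qint q (1 + h) * catw q (h + lbar a) w)"
  by (simp add: lderiv_def)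

lemma height_homog_catw: "height_homog (-h) (catw q h)"
proof -
  have "catw q h w \<noteq> 0 \<Longrightarrow> height w = -h" for w
    by (induction w arbitrary: h) (auto split: if_splits)
  then show ?thesis by (simp add: height_homog_def)
qed

lemma twist_catw [simp]:
  "twist q X (catw q h) = (\<lambda>w. q powi (-2 * h) * catw q h w)"
  "twist q Y (catw q h) = (\<lambda>w. q powi (2 * h) * catw q h w)"
  using twist_height_homog[OF height_homog_catw] by simp_all

definition xcat :: "'f::zero series \<Rightarrow> 'f series" where
  "xcat f w = (case w of X # u \<Rightarrow> f u | _ \<Rightarrow> 0)"

lemma xcat_simps [simp]: "xcat f [] = 0" "xcat f (X # w) = f w" "xcat f (Y # w) = 0"
  by (simp_all add: xcat_def)

lemma lderiv_xcat [simp]: "lderiv X (xcat f) = f" "lderiv Y (xcat f) = (\<lambda>w. 0)"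
  by (simp_all add: lderiv_def)

lemma height_homog_xcat: "height_homog c f \<Longrightarrow> height_homog (c + 1) (xcat f)"
  by (auto simp: height_homog_def xcat_def split: list.splits letter.splits)

definition caty :: "'f::zero series \<Rightarrow> 'f series" where
  "caty f w = (if w \<noteq> [] \<and> last w = Y then f (butlast w) else 0)"

lemma caty_Nil [simp]: "caty f [] = 0"
  and caty_Cons: "caty f (a # w) = (if w = [] then (if a = Y then f [] else 0) else caty (lderiv a f) w)"
  by (simp_all add: caty_def)

lemma caty_X_Cons [simp]: "caty f (X # w) = caty (lderiv X f) w"
  by (simp add: caty_Cons)

lemma caty_Y_Cons [simp]: "caty f (Y # w) = caty (lderiv Y f) w + f [] * (delta [] w :: 'f::field)"
  by (simp add: caty_Cons delta_def)

lemma lderiv_caty [simp]: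
  "lderiv X (caty f) = caty (lderiv X f)"
  "lderiv Y (caty f) = (\<lambda>w. caty (lderiv Y f) w + f [] * delta [] (w :: letter list) :: 'f::field)"
  by (auto simp: fun_eq_iff caty_Cons delta_def)

lemma caty_scale [simp]: "caty (\<lambda>w. c * f w) = (\<lambda>w. (c :: 'f::mult_zero) * caty f w)"
  and caty_zero [simp]: "caty (\<lambda>w. 0) = (\<lambda>w. 0)"
  by (simp_all add: caty_def fun_eq_iff)

lemma height_homog_caty: "height_homog c f \<Longrightarrow> height_homog (c - 1) (caty f)"
  unfolding height_homog_def caty_def
  by (metis append_butlast_last_id height_snoc lbar_simps(2) diff_conv_add_uminus)

lemma twist_caty_catw [simp]:
  "twist q X (caty (catw q h)) = (\<lambda>w. q powi (-2 * (h + 1)) * caty (catw q h) w)"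
  "twist q Y (caty (catw q h)) = (\<lambda>w. q powi (2 * (h + 1)) * caty (catw q h) w)"
proof -
  have homog: "height_homog (-h - 1) (caty (catw q h))"
    using height_homog_caty[OF height_homog_catw] .
  have "2 * (-h - 1) = -2 * (h + 1)" "-2 * (-h - 1) = 2 * (h + 1)"
    by simp_all
  then show "twist q X (caty (catw q h)) = (\<lambda>w. q powi (-2 * (h + 1)) * caty (catw q h) w)"
    "twist q Y (caty (catw q h)) = (\<lambda>w. q powi (2 * (h + 1)) * caty (catw q h) w)"
    by (simp_all only: twist_height_homog[OF homog])
qed

definition xC :: "'f::field \<Rightarrow> 'f series" where
  "xC q = xcat (catw q 0)"

definition xCy :: "'f::field \<Rightarrow> 'f series" where
  "xCy q = xcat (caty (catw q 0))"

lemma xC_simps [simp]: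
  "xC q [] = 0" "xC q (X # w) = catw q 0 w" "xC q (Y # w) = 0"
  "lderiv X (xC q) = catw q 0" "lderiv Y (xC q) = (\<lambda>w. 0)"
  "twist q X (xC q) = (\<lambda>w. q^2 * xC q w)" "twist q Y (xC q) = (\<lambda>w. q powi (-2) * xC q w)"
proof -
  have homog: "height_homog 1 (xC q)"
    unfolding xC_def using height_homog_xcat[OF height_homog_catw, of 0] by simp
  show "twist q X (xC q) = (\<lambda>w. q^2 * xC q w)" "twist q Y (xC q) = (\<lambda>w. q powi (-2) * xC q w)"
    using twist_height_homog[OF homog] by simp_all
qed (simp_all add: xC_def)

lemma xCy_simps [simp]:
  "xCy q [] = 0" "xCy q (X # w) = caty (catw q 0) w" "xCy q (Y # w) = 0"
  "lderiv X (xCy q) = caty (catw q 0)" "lderiv Y (xCy q) = (\<lambda>w. 0)"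
  "twist q a (xCy q) = xCy q"
proof -
  have homog: "height_homog 0 (xCy q)"
    unfolding xCy_def using height_homog_xcat[OF height_homog_caty[OF height_homog_catw], of 0]
    by simp
  show "twist q a (xCy q) = xCy q"
    using twist_height_homog[OF homog] by (cases a) simp_all
qed (simp_all add: xCy_def)

definition xweight :: "'f::comm_semiring_1 \<Rightarrow> 'f series \<Rightarrow> 'f series" where
  "xweight c f w = c ^ nX w * f w"

lemma lderiv_xweight [simp]:
  "lderiv X (xweight c f) = (\<lambda>w. c * xweight c (lderiv X f) w)"
  "lderiv Y (xweight c f) = xweight c (lderiv Y f)"
  by (simp_all add: xweight_def fun_eq_iff algebra_simps)

lemma twist_xweight [simp]: "twist q a (xweight c f) = xweight c (twist q a f)"
  by (simp add: twist_def xweight_def fun_eq_iff algebra_simps)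

lemma xweight_simps [simp]:
  "xweight c (\<lambda>w. k * f w) = (\<lambda>w. k * xweight c f w)"
  "xweight c (\<lambda>w. f w + g w) = (\<lambda>w. xweight c f w + xweight c g w)"
  "xweight c (\<lambda>w. 0) = (\<lambda>w. 0)"
  "xweight c (delta []) = delta []"
  "xweight c f [] = f []"
  by (auto simp: xweight_def delta_def fun_eq_iff algebra_simps)

lemma deg_part_xweight: "deg_part i (xweight c f) = (\<lambda>w. c ^ i * deg_part i f w)"
  by (auto simp: deg_part_def xweight_def fun_eq_iff)

definition xcount :: "'f::comm_semiring_1 series \<Rightarrow> 'f series" where
  "xcount f w = of_nat (nX w) * f w"

lemma xcount_simps [simp]:
  "xcount (\<lambda>w. k * f w) = (\<lambda>w. k * xcount f w)"
  "xcount f [] = 0"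
  by (simp_all add: xcount_def fun_eq_iff algebra_simps)

section \<open>q-commutator identities\<close>

locale qgeneric =
  fixes q :: "'f::field"
  assumes qint_pos_nonzero: "0 < n \<Longrightarrow> qint q n \<noteq> 0"
begin

lemma qdiff_nonzero: "q - inverse q \<noteq> 0"
  using qint_pos_nonzero[of 1] by (auto simp: qint_def)

lemma q_nonzero: "q \<noteq> 0"
  using qdiff_nonzero by auto

lemma q_square_ne_1: "q * q \<noteq> 1"
  using qdiff_nonzero q_nonzero by (auto simp: field_simps)

lemma qint_times: "(q - inverse q) * qint q n = q powi n - q powi (-n)"
  using qdiff_nonzero by (simp add: qint_def)

text \<open>Identities between q-numbers are identities between Laurent polynomials in \<open>q\<close> and a few
  powers \<open>q\<^sup>h\<close>.  Writing the denominator of \<open>[n]\<^sub>q = q (q\<^sup>n - q\<^sup>-\<^sup>n) / (q\<^sup>2 - 1)\<close> as an opaque constant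
  lets \<open>field_simps\<close> clear it; what remains is a polynomial identity.\<close>

definition qden :: "'f" where
  "qden = q * q - 1"

lemma qden_nonzero: "qden \<noteq> 0"
  using q_square_ne_1 by (simp add: qden_def)

lemma qint_Laurent: "qint q n = q * (q powi n - q powi (-n)) / qden"
  using q_nonzero q_square_ne_1 by (simp add: qint_def qden_def field_simps)

lemmas Laurent_simps = qint_Laurent power_int_add power_int_diff power_int_minus power_int_mult
  q_nonzero qden_nonzero

lemma qint_1 [simp]: "qint q 1 = 1"
  using qdiff_nonzero by (simp add: qint_def)

lemma qcommutator_catw_y:
  "(q - inverse q) * qint q (1 + h) * catw q (h + 1) w
   = q^2 * qstar q (catw q h) (delta [Y]) w - q powi (-2 - 2 * h) * qstar q (delta [Y]) (catw q h) w"
proof (induction w arbitrary: h)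
  case Nil
  show ?case by (cases "h = -1") (simp_all add: delta_def)
next
  case (Cons a w)
  show ?case
  proof (cases a)
    case X
    let ?S = "qstar q (catw q (h + 1)) (delta [Y]) w" and ?T = "qstar q (delta [Y]) (catw q (h + 1)) w"
    have IH: "(q - inverse q) * qint q (2 + h) * catw q (2 + h) w = q^2 * ?S - q powi (-4 - 2 * h) * ?T"
      using Cons.IH[of "h + 1"] by (simp add: algebra_simps)
    have "q powi (-2 - 2 * h) * q powi (-2) = q powi (-4 - 2 * h)"
      by (simp add: Laurent_simps field_simps)
    with IH show ?thesis unfolding X by simp algebra
  next
    case Y
    let ?S = "qstar q (catw q (h - 1)) (delta [Y]) w" and ?T = "qstar q (delta [Y]) (catw q (h - 1)) w"
    have IH: "(q - inverse q) * qint q h * catw q h w = q^2 * ?S - q powi (-2 * h) * ?T"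
      using Cons.IH[of "h - 1"] by (simp add: algebra_simps)
    have "q powi (-2 - 2 * h) * q^2 = q powi (-2 * h)" "q^2 * q powi (2 * h) = q powi (2 * h + 2)"
      "qint q (1 + h) * qint q (2 + h) = qint q (1 + h) * qint q h + qint q (2 * h + 2)"
      "(q - inverse q) * qint q (2 * h + 2) = q powi (2 * h + 2) - q powi (-2 - 2 * h)"
      by (simp_all add: Laurent_simps field_simps ring_distribs) (unfold qden_def, algebra+)
    with IH show ?thesis unfolding Y by simp algebra
  qed
qed

lemma qcommutator_x_caty_catw:
  "0 \<le> g \<Longrightarrow> (q - inverse q) * catw q g w
   = q powi (2 * g + 2) * qstar q (delta [X]) (caty (catw q g)) w - qstar q (caty (catw q g)) (delta [X]) w
     + (q - inverse q) * qint q (1 + g) * caty (catw q (g - 1)) w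
     + (q - inverse q) * of_bool (g = 0) * delta [] w"
proof (induction w arbitrary: g)
  case Nil
  show ?case by (simp add: delta_def)
next
  case (Cons a w)
  show ?case
  proof (cases a)
    case X
    let ?S = "qstar q (delta [X]) (caty (catw q (g + 1))) w"
      and ?T = "qstar q (caty (catw q (g + 1))) (delta [X]) w"
    have IH: "(q - inverse q) * catw q (g + 1) w
        = q powi (2 * g + 4) * ?S - ?T + (q - inverse q) * qint q (2 + g) * caty (catw q g) w"
      using Cons.IH[of "g + 1"] Cons.prems by (simp add: algebra_simps)
    have "q powi (2 * g + 2) * q^2 = q powi (2 * g + 4)"
      "qint q (1 + g) * qint q (2 + g) = qint q (1 + g) * qint q g + qint q (2 * g + 2)"
      "(q - inverse q) * qint q (2 * g + 2) = q powi (2 * g + 2) - q powi (-2 * (g + 1))"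
      by (simp_all add: Laurent_simps field_simps ring_distribs) (unfold qden_def, algebra+)
    with IH show ?thesis unfolding X by simp algebra
  next
    case Y
    show ?thesis
    proof (cases "g = 0")
      case True
      have "q^2 * q powi (-2) = 1"
        by (simp add: Laurent_simps field_simps)
      then show ?thesis unfolding Y True by simp
    next
      case False
      let ?S = "qstar q (delta [X]) (caty (catw q (g - 1))) w"
        and ?T = "qstar q (caty (catw q (g - 1))) (delta [X]) w"
      have IH: "(q - inverse q) * catw q (g - 1) w
          = q powi (2 * g) * ?S - ?T + (q - inverse q) * qint q g * caty (catw q (g - 2)) w
            + (q - inverse q) * of_bool (g = 1) * delta [] w"
        using Cons.IH[of "g - 1"] Cons.prems False by (simp add: algebra_simps)
      have "q powi (2 * g + 2) * q powi (-2) = q powi (2 * g)"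
        by (simp add: Laurent_simps field_simps)
      with IH show ?thesis unfolding Y by (simp add: False of_bool_def split del: if_split) algebra
    qed
  qed
qed

text \<open>In the two product formulas below, the induction hypotheses only determine the new terms
  times \<open>[g + h + 3]\<^sub>q\<close>, resp. \<open>[g + h + 1]\<^sub>q\<close>; hence each step is proved after multiplying by
  that nonzero factor.\<close>

lemma qstar_xweight_caty_catw:
  "0 \<le> g \<Longrightarrow> 0 \<le> h \<Longrightarrow> qint q (1 + h) * q powi (h * (g + 1)) * catw q (g + h + 1) w
    = qint q (g + h + 2) * qstar q (xweight (q^2) (caty (catw q g))) (catw q h) w"
proof (induction w arbitrary: g h)
  case Nil
  then show ?case by simp
next
  case (Cons a w)
  show ?case
  proof (cases a)
    case X
    let ?T1 = "qstar q (xweight (q^2) (caty (catw q (g + 1)))) (catw q h) w"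
    let ?T2 = "qstar q (xweight (q^2) (caty (catw q g))) (catw q (h + 1)) w"
    have IH1: "qint q (1 + h) * q powi (h * (g + 2)) * catw q (g + h + 2) w = qint q (g + h + 3) * ?T1"
      using Cons.IH[of "g + 1" h] Cons.prems by (simp add: algebra_simps)
    have IH2: "qint q (2 + h) * q powi ((h + 1) * (g + 1)) * catw q (g + h + 2) w = qint q (g + h + 3) * ?T2"
      using Cons.IH[of g "h + 1"] Cons.prems by (simp add: algebra_simps)
    have nonzero: "qint q (g + h + 3) \<noteq> 0"
      using qint_pos_nonzero Cons.prems by simp
    have "qint q (g + h + 3) * q powi (h * (g + 1)) = q^2 * qint q (1 + g) * q powi (h * (g + 2))
        + q powi (-2 * (g + 1)) * qint q (2 + h) * q powi ((h + 1) * (g + 1))"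
      by (simp add: Laurent_simps field_simps ring_distribs) (unfold qden_def, algebra)
    moreover have "catw q (g + h + 1) (X # w) = qint q (g + h + 2) * catw q (g + h + 2) w"
      by (simp add: algebra_simps)
    moreover have "qstar q (xweight (q^2) (caty (catw q g))) (catw q h) (X # w)
        = q^2 * qint q (1 + g) * ?T1 + q powi (-2 * (g + 1)) * qint q (1 + h) * ?T2"
      by simp
    ultimately show ?thesis
      unfolding X using IH1 IH2 by (subst mult_left_cancel[OF nonzero, symmetric]) algebra
  next
    case Y
    define T1 where "T1 = (if g = 0 then catw q h w
      else qstar q (xweight (q^2) (caty (catw q (g - 1)))) (catw q h) w)"
    define T2 where "T2 = qstar q (xweight (q^2) (caty (catw q g))) (catw q (h - 1)) w"
    have IH1: "qint q (1 + h) * q powi (h * g) * catw q (g + h) w = qint q (g + h + 1) * T1"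
      using Cons.IH[of "g - 1" h] Cons.prems by (cases "g = 0") (simp_all add: T1_def algebra_simps)
    have IH2: "qint q h * q powi ((h - 1) * (g + 1)) * catw q (g + h) w = qint q (g + h + 1) * T2"
      using Cons.IH[of g "h - 1"] Cons.prems by (cases "h = 0") (simp_all add: T2_def algebra_simps)
    have nonzero: "qint q (g + h + 1) \<noteq> 0"
      using qint_pos_nonzero Cons.prems by simp
    have "qint q (g + h + 1) * q powi (h * (g + 1))
        = qint q (1 + g) * q powi (h * g) + q powi (2 * (g + 1)) * qint q h * q powi ((h - 1) * (g + 1))"
      by (simp add: Laurent_simps field_simps ring_distribs) (unfold qden_def, algebra)
    moreover have "catw q (g + h + 1) (Y # w) = qint q (g + h + 2) * catw q (g + h) w"
      by (simp add: algebra_simps)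
    moreover have "qstar q (xweight (q^2) (caty (catw q g))) (catw q h) (Y # w)
        = qint q (1 + g) * T1 + q powi (2 * (g + 1)) * qint q (1 + h) * T2"
      by (cases "g = 0") (simp_all add: T1_def T2_def)
    ultimately show ?thesis
      unfolding Y using IH1 IH2 by (subst mult_left_cancel[OF nonzero, symmetric]) algebra
  qed
qed

lemma qstar_catw_xweight_caty:
  "0 \<le> g \<Longrightarrow> 0 \<le> h \<Longrightarrow> qint q (1 + h) * q powi (h * (g + 1)) * catw q (g + h + 1) w
    = qint q (g + h + 2) * qstar q (catw q h) (xweight (q powi (-2)) (caty (catw q g))) w"
proof (induction w arbitrary: g h)
  case Nil
  then show ?case by simp
next
  case (Cons a w)
  show ?case
  proof (cases a)
    case X
    let ?T1 = "qstar q (catw q h) (xweight (q powi (-2)) (caty (catw q (g + 1)))) w"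
    let ?T2 = "qstar q (catw q (h + 1)) (xweight (q powi (-2)) (caty (catw q g))) w"
    have IH1: "qint q (1 + h) * q powi (h * (g + 2)) * catw q (g + h + 2) w = qint q (g + h + 3) * ?T1"
      using Cons.IH[of "g + 1" h] Cons.prems by (simp add: algebra_simps)
    have IH2: "qint q (2 + h) * q powi ((h + 1) * (g + 1)) * catw q (g + h + 2) w = qint q (g + h + 3) * ?T2"
      using Cons.IH[of g "h + 1"] Cons.prems by (simp add: algebra_simps)
    have nonzero: "qint q (g + h + 3) \<noteq> 0"
      using qint_pos_nonzero Cons.prems by simp
    have "qint q (g + h + 3) * q powi (h * (g + 1)) = qint q (2 + h) * q powi ((h + 1) * (g + 1))
        + q powi (-2 * h) * q powi (-2) * qint q (1 + g) * q powi (h * (g + 2))"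
      by (simp add: Laurent_simps field_simps ring_distribs) (unfold qden_def, algebra)
    moreover have "catw q (g + h + 1) (X # w) = qint q (g + h + 2) * catw q (g + h + 2) w"
      by (simp add: algebra_simps)
    moreover have "qstar q (catw q h) (xweight (q powi (-2)) (caty (catw q g))) (X # w)
        = qint q (1 + h) * ?T2 + q powi (-2 * h) * q powi (-2) * qint q (1 + g) * ?T1"
      by simp
    ultimately show ?thesis
      unfolding X using IH1 IH2 by (subst mult_left_cancel[OF nonzero, symmetric]) algebra
  next
    case Y
    define T1 where "T1 = (if g = 0 then catw q h w
      else qstar q (catw q h) (xweight (q powi (-2)) (caty (catw q (g - 1)))) w)"
    define T2 where "T2 = qstar q (catw q (h - 1)) (xweight (q powi (-2)) (caty (catw q g))) w"
    have IH1: "qint q (1 + h) * q powi (h * g) * catw q (g + h) w = qint q (g + h + 1) * T1"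
      using Cons.IH[of "g - 1" h] Cons.prems by (cases "g = 0") (simp_all add: T1_def algebra_simps)
    have IH2: "qint q h * q powi ((h - 1) * (g + 1)) * catw q (g + h) w = qint q (g + h + 1) * T2"
      using Cons.IH[of g "h - 1"] Cons.prems by (cases "h = 0") (simp_all add: T2_def algebra_simps)
    have nonzero: "qint q (g + h + 1) \<noteq> 0"
      using qint_pos_nonzero Cons.prems by simp
    have "qint q (g + h + 1) * q powi (h * (g + 1))
        = qint q h * q powi ((h - 1) * (g + 1)) + q powi (2 * h) * qint q (1 + g) * q powi (h * g)"
      by (simp add: Laurent_simps field_simps ring_distribs) (unfold qden_def, algebra)
    moreover have "catw q (g + h + 1) (Y # w) = qint q (g + h + 2) * catw q (g + h) w"
      by (simp add: algebra_simps)
    moreover have "qstar q (catw q h) (xweight (q powi (-2)) (caty (catw q g))) (Y # w)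
        = qint q (1 + h) * T2 + q powi (2 * h) * qint q (1 + g) * T1"
      by (cases "g = 0") (simp_all add: T1_def T2_def)
    ultimately show ?thesis
      unfolding Y using IH1 IH2 by (subst mult_left_cancel[OF nonzero, symmetric]) algebra
  qed
qed

lemma qcommutator_xweight_xCy_catw:
  "0 \<le> h \<Longrightarrow> (q - inverse q) * xcount (catw q h) w
    = qstar q (xweight (q^2) (xCy q)) (catw q h) w - qstar q (catw q h) (xweight (q powi (-2)) (xCy q)) w"
proof (induction w arbitrary: h)
  case Nil
  then show ?case by simp
next
  case (Cons a w)
  show ?case
  proof (cases a)
    case X
    let ?A1 = "qstar q (xweight (q^2) (caty (catw q 0))) (catw q h) w"
    let ?A2 = "qstar q (catw q h) (xweight (q powi (-2)) (caty (catw q 0))) w"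
    let ?B1 = "qstar q (xweight (q^2) (xCy q)) (catw q (h + 1)) w"
    let ?B2 = "qstar q (catw q (h + 1)) (xweight (q powi (-2)) (xCy q)) w"
    have IH: "(q - inverse q) * xcount (catw q (h + 1)) w = ?B1 - ?B2"
      using Cons.IH[of "h + 1"] Cons.prems by simp
    have A1: "qint q (1 + h) * q powi h * catw q (h + 1) w = qint q (2 + h) * ?A1"
      using qstar_xweight_caty_catw[of 0 h w] Cons.prems by (simp add: algebra_simps)
    have A2: "qint q (1 + h) * q powi h * catw q (h + 1) w = qint q (2 + h) * ?A2"
      using qstar_catw_xweight_caty[of 0 h w] Cons.prems by (simp add: algebra_simps)
    have nonzero: "qint q (2 + h) \<noteq> 0"
      using qint_pos_nonzero Cons.prems by simp
    have "(q - inverse q) * qint q (2 + h) = q powi (2 + h) - q powi (-(2 + h))"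
      by (rule qint_times)
    moreover have "q^2 * q powi h = q powi (2 + h)" "q powi (-2 * h) * q powi (-2) * q powi h = q powi (-(2 + h))"
      by (simp_all add: Laurent_simps field_simps power2_eq_square)
    moreover have "xcount (catw q h) (X # w) = qint q (1 + h) * (xcount (catw q (h + 1)) w + catw q (h + 1) w)"
      by (simp add: xcount_def algebra_simps)
    moreover have "qstar q (xweight (q^2) (xCy q)) (catw q h) (X # w) = q^2 * ?A1 + qint q (1 + h) * ?B1"
      "qstar q (catw q h) (xweight (q powi (-2)) (xCy q)) (X # w)
        = qint q (1 + h) * ?B2 + q powi (-2 * h) * q powi (-2) * ?A2"
      by simp_all
    ultimately show ?thesis
      unfolding X using IH A1 A2 by (subst mult_left_cancel[OF nonzero, symmetric]) algebra
  next
    case Y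
    show ?thesis
    proof (cases "h = 0")
      case True
      then show ?thesis unfolding Y by (simp add: xcount_def)
    next
      case False
      have "(q - inverse q) * xcount (catw q (h - 1)) w
          = qstar q (xweight (q^2) (xCy q)) (catw q (h - 1)) w
            - qstar q (catw q (h - 1)) (xweight (q powi (-2)) (xCy q)) w"
        using Cons.IH[of "h - 1"] Cons.prems False by simp
      then show ?thesis unfolding Y by (simp add: xcount_def) algebra
    qed
  qed
qed

lemma qcommutator_x_xCy:
  "(q - inverse q) * (xC q w - delta [X] w) = qstar q (delta [X]) (xCy q) w - qstar q (xCy q) (delta [X]) w"
proof (cases w)
  case (Cons a u)
  show ?thesis
  proof (cases a)
    case X
    have "(q - inverse q) * catw q 0 u = q^2 * qstar q (delta [X]) (caty (catw q 0)) u
        - qstar q (caty (catw q 0)) (delta [X]) u + (q - inverse q) * delta [] u"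
      using qcommutator_x_caty_catw[of 0 u] by simp
    then show ?thesis unfolding Cons X by simp algebra
  qed (simp add: Cons)
qed (simp add: delta_def)

lemma qcommutator_xC_y:
  "(q - inverse q) * (catw q 0 w - delta [] w) = q^2 * qstar q (xC q) (delta [Y]) w - qstar q (delta [Y]) (xC q) w"
proof (cases w)
  case (Cons a u)
  show ?thesis
  proof (cases a)
    case X
    have "(q - inverse q) * catw q 1 u
        = q^2 * qstar q (catw q 0) (delta [Y]) u - q powi (-2) * qstar q (delta [Y]) (catw q 0) u"
      using qcommutator_catw_y[of 0 u] by simp
    then show ?thesis unfolding Cons X by simp
  next
    case Y
    have "q^2 * q powi (-2) = 1"
      by (simp add: Laurent_simps field_simps)
    then show ?thesis unfolding Cons Y by (simp add: mult.assoc[symmetric])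
  qed
qed (simp add: delta_def)

section \<open>Homogeneous parts in \<open>U\<close>\<close>

lemma deg_part_xC_in_Useries:
  assumes "deg_part n (xCy q) \<in> Useries q"
  shows "deg_part (Suc n) (xC q) \<in> Useries q"
proof -
  have "(q - inverse q) * (deg_part (Suc n) (xC q) w - deg_part (Suc n) (delta [X]) w)
      = deg_part (Suc n) (qstar q (delta [X]) (xCy q)) w - deg_part (Suc n) (qstar q (xCy q) (delta [X])) w"
    for w
    using qcommutator_x_xCy[of w] by (simp add: deg_part_def)
  then have "(q - inverse q) * (deg_part (Suc n) (xC q) w - deg_part (Suc n) (delta [X]) w)
      = qstar q (delta [X]) (deg_part n (xCy q)) w - qstar q (deg_part n (xCy q)) (delta [X]) w" for w
    by (simp add: deg_part_qstar_delta[where u = "[X]" and m = n, simplified])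
  then have "deg_part (Suc n) (xC q) = (\<lambda>w. deg_part (Suc n) (delta [X]) w + inverse (q - inverse q)
      * (qstar q (delta [X]) (deg_part n (xCy q)) w - qstar q (deg_part n (xCy q)) (delta [X]) w))"
    using qdiff_nonzero by (auto simp: fun_eq_iff field_simps)
  also have "\<dots> \<in> Useries q"
    by (intro Useries_add Useries_scale Useries_diff Useries_qstar assms)
      (simp_all add: deg_part_delta_X delta_in_Useries Useries_zero)
  finally show ?thesis .
qed

lemma deg_part_catw_in_Useries:
  assumes "deg_part (Suc n) (xC q) \<in> Useries q"
  shows "deg_part (Suc n) (catw q 0) \<in> Useries q"
proof -
  have "(q - inverse q) * deg_part (Suc n) (catw q 0) w
      = q^2 * deg_part (Suc n) (qstar q (xC q) (delta [Y])) w - deg_part (Suc n) (qstar q (delta [Y]) (xC q)) w"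
    for w
    using qcommutator_xC_y[of w] by (auto simp: deg_part_def delta_def split: if_splits)
  then have "(q - inverse q) * deg_part (Suc n) (catw q 0) w
      = q^2 * qstar q (deg_part (Suc n) (xC q)) (delta [Y]) w - qstar q (delta [Y]) (deg_part (Suc n) (xC q)) w"
    for w
    by (simp add: deg_part_qstar_delta[where u = "[Y]" and m = "Suc n", simplified])
  then have "deg_part (Suc n) (catw q 0) = (\<lambda>w. inverse (q - inverse q)
      * (q^2 * qstar q (deg_part (Suc n) (xC q)) (delta [Y]) w - qstar q (delta [Y]) (deg_part (Suc n) (xC q)) w))"
    using qdiff_nonzero by (auto simp: fun_eq_iff field_simps)
  also have "\<dots> \<in> Useries q"
    by (intro Useries_scale Useries_diff Useries_qstar assms delta_in_Useries)
  finally show ?thesis .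
qed

lemma deg_part_zero_catw: "deg_part 0 (catw q 0) = delta []"
  and deg_part_zero_xCy: "deg_part 0 (xCy q) = (\<lambda>w. 0)"
proof -
  have "catw q 0 w = (if w = [] then 1 else 0)" if "nX w = 0" for w
  proof (cases w)
    case (Cons a u)
    then show ?thesis using that by (cases a) simp_all
  qed simp
  then show "deg_part 0 (catw q 0) = delta []"
    by (auto simp: deg_part_def delta_def fun_eq_iff)
  show "deg_part 0 (xCy q) = (\<lambda>w. 0)"
    by (auto simp: deg_part_def fun_eq_iff xCy_def xcat_def split: list.splits letter.splits)
qed

lemma deg_part_xCy_in_Useries:
  assumes E: "\<And>j. j \<le> Suc k \<Longrightarrow> deg_part j (catw q 0) \<in> Useries q"
    and P: "\<And>j. j \<le> k \<Longrightarrow> deg_part j (xCy q) \<in> Useries q"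
  shows "deg_part (Suc k) (xCy q) \<in> Useries q"
proof -
  let ?c = "q^2" and ?d = "q powi (-2)"
  let ?E = "\<lambda>j. deg_part j (catw q 0)" and ?P = "\<lambda>j. deg_part j (xCy q)"
  define S where "S w = (\<Sum>i\<le>k. ?c ^ i * qstar q (?P i) (?E (Suc k - i)) w)
    - (\<Sum>i\<le>k. ?d ^ (k - i) * qstar q (?E (Suc i)) (?P (k - i)) w)" for w
  define K where "K = ?c ^ Suc k - ?d ^ Suc k"
  have "(q - inverse q) * of_nat (Suc k) * ?E (Suc k) w
      = deg_part (Suc k) (qstar q (xweight ?c (xCy q)) (catw q 0)) w
        - deg_part (Suc k) (qstar q (catw q 0) (xweight ?d (xCy q))) w" for w
    using qcommutator_xweight_xCy_catw[of 0 w] by (auto simp: deg_part_def xcount_def mult.assoc)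
  also have "deg_part (Suc k) (qstar q (xweight ?c (xCy q)) (catw q 0)) w
      = (\<Sum>i\<le>k. ?c ^ i * qstar q (?P i) (?E (Suc k - i)) w) + ?c ^ Suc k * ?P (Suc k) w" for w
    by (simp add: deg_part_qstar deg_part_xweight deg_part_zero_catw)
  also have "deg_part (Suc k) (qstar q (catw q 0) (xweight ?d (xCy q))) w
      = ?d ^ Suc k * ?P (Suc k) w + (\<Sum>i\<le>k. ?d ^ (k - i) * qstar q (?E (Suc i)) (?P (k - i)) w)" for w
    by (simp add: deg_part_qstar deg_part_xweight deg_part_zero_catw sum.atMost_Suc_shift
        del: sum.atMost_Suc)
  also have "(\<Sum>i\<le>k. ?c ^ i * qstar q (?P i) (?E (Suc k - i)) w) + ?c ^ Suc k * ?P (Suc k) w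
      - (?d ^ Suc k * ?P (Suc k) w + (\<Sum>i\<le>k. ?d ^ (k - i) * qstar q (?E (Suc i)) (?P (k - i)) w))
      = K * ?P (Suc k) w + S w" for w
    by (simp add: K_def S_def algebra_simps)
  finally have "(q - inverse q) * of_nat (Suc k) * ?E (Suc k) w = K * ?P (Suc k) w + S w" for w .
  moreover have "?c ^ Suc k = q powi (2 * int (Suc k))" "?d ^ Suc k = q powi (- (2 * int (Suc k)))"
    by (simp_all add: power_int_power' Laurent_simps field_simps flip: power_int_numeral)
  then have "K = (q - inverse q) * qint q (2 * int (Suc k))"
    by (simp add: K_def qint_times)
  then have "K \<noteq> 0"
    using qint_pos_nonzero[of "2 * int (Suc k)"] qdiff_nonzero by simp
  ultimately have "?P (Suc k) = (\<lambda>w. inverse K * ((q - inverse q) * of_nat (Suc k) * ?E (Suc k) w - S w))"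
    by (auto simp: fun_eq_iff field_simps)
  also have "\<dots> \<in> Useries q"
    unfolding S_def by (intro Useries_scale Useries_diff Useries_sum Useries_qstar E P) auto
  finally show ?thesis .
qed

lemma deg_parts_in_Useries: "deg_part m (catw q 0) \<in> Useries q \<and> deg_part m (xCy q) \<in> Useries q"
proof (induction m rule: less_induct)
  case (less m)
  show ?case
  proof (cases m)
    case 0
    then show ?thesis by (simp add: deg_part_zero_catw deg_part_zero_xCy delta_in_Useries Useries_zero)
  next
    case (Suc k)
    then have P: "\<And>j. j \<le> k \<Longrightarrow> deg_part j (xCy q) \<in> Useries q"
      and E: "\<And>j. j \<le> k \<Longrightarrow> deg_part j (catw q 0) \<in> Useries q"
      using less by auto
    have "deg_part (Suc k) (catw q 0) \<in> Useries q"
      by (intro deg_part_catw_in_Useries deg_part_xC_in_Useries P) simp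
    with E have "\<And>j. j \<le> Suc k \<Longrightarrow> deg_part j (catw q 0) \<in> Useries q"
      by (metis le_SucE)
    then show ?thesis
      using Suc deg_part_xCy_in_Useries P by blast
  qed
qed

end

section \<open>The Catalan elements\<close>

lemma lookup_xvy: "Poly_Mapping.lookup (xvy p) = xcat (caty (Poly_Mapping.lookup p))"
proof
  fix v
  show "Poly_Mapping.lookup (xvy p) v = xcat (caty (Poly_Mapping.lookup p)) v"
  proof (cases "\<exists>u. v = X # u @ [Y]")
    case True
    then obtain u where v: "v = X # u @ [Y]" by blast
    have "Poly_Mapping.lookup (xvy p) v
        = (\<Sum>w\<in>Poly_Mapping.keys p. if w = u then Poly_Mapping.lookup p u else 0)"
      unfolding xvy_def v by (auto simp: lookup_sum lookup_single when_def intro!: sum.cong)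
    then show ?thesis by (simp add: v xcat_def caty_def in_keys_iff)
  next
    case False
    then have "xcat (caty (Poly_Mapping.lookup p)) v = 0"
      by (auto simp: xcat_def caty_def split: list.splits letter.splits)
        (metis append_butlast_last_id)
    with False show ?thesis
      by (auto simp: xvy_def lookup_sum lookup_single when_def intro!: sum.neutral)
  qed
qed

lemma deg_part_xcat: "xcat (deg_part k f) = deg_part (Suc k) (xcat f)"
  by (auto simp: fun_eq_iff xcat_def deg_part_def split: list.splits letter.splits)

lemma deg_part_caty: "caty (deg_part k f) = deg_part k (caty f)"
  by (auto simp: fun_eq_iff caty_def deg_part_def)
    (metis append_butlast_last_id nX_snoc nX_simps(1,3) add_0_right)+

lemma lookup_Cat_eq:
  "Poly_Mapping.lookup (Cat q n) u = (if length u = 2 * n \<and> catalan u then catcoeff q u else 0)"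
proof -
  have "finite {w :: letter list. set w \<subseteq> {X, Y} \<and> length w = 2 * n}"
    by (rule finite_lists_length_eq) simp
  moreover have "set w \<subseteq> {X, Y}" for w
    using letter.exhaust by blast
  ultimately have "finite {w. length w = 2 * n \<and> catalan w}"
    by (simp add: conj_commute)
  then show ?thesis
    by (simp add: Cat_def lookup_sum lookup_single when_def eq_commute[of _ u] cong: if_cong)
qed

lemma catw_dips_below_zero:
  "i \<le> length u \<Longrightarrow> h + (\<Sum>j<i. lbar (u ! j)) < 0 \<Longrightarrow> catw q h u = 0"
proof (induction u arbitrary: h i)
  case (Cons a u)
  show ?case
  proof (cases i)
    case (Suc i')
    then have "catw q (h + lbar a) u = 0"
      using Cons by (intro Cons.IH[of i']) (auto simp: sum.lessThan_Suc_shift algebra_simps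
          simp del: sum.lessThan_Suc)
    then show ?thesis by simp
  qed (use Cons.prems in simp)
qed simp

context qgeneric
begin

text \<open>The last factor of the product, as of \<open>catcoeff\<close>, is \<open>[1]\<^sub>q\<close>, which is \<open>1\<close> only because
  \<open>q\<^sup>2 \<noteq> 1\<close>.\<close>

lemma catw_prod:
  "catw q h u = (if h + height u = 0 then (\<Prod>i=0..length u. qint q (1 + h + (\<Sum>j<i. lbar (u ! j)))) else 0)"
proof (induction u arbitrary: h)
  case (Cons a u)
  have "(\<Prod>i=0..length (a # u). qint q (1 + h + (\<Sum>j<i. lbar ((a # u) ! j))))
      = qint q (1 + h) * (\<Prod>i=0..length u. qint q (1 + (h + lbar a) + (\<Sum>j<i. lbar (u ! j))))"
    by (simp add: prod.atLeast0_atMost_Suc_shift sum.lessThan_Suc_shift algebra_simps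
        del: prod.cl_ivl_Suc sum.lessThan_Suc)
  then show ?case using Cons.IH[of "h + lbar a"] by (simp add: algebra_simps)
qed simp

lemma catw_zero_catalan: "catw q 0 u = (if catalan u then catcoeff q u else 0)"
proof (cases "catalan u")
  case True
  then show ?thesis by (simp add: catw_prod catcoeff_def height_conv_nth catalan_def)
next
  case False
  show ?thesis
  proof (cases "height u = 0")
    case True
    with False obtain i where "i \<le> length u" "(\<Sum>j<i. lbar (u ! j)) < 0"
      unfolding catalan_def height_conv_nth by (metis atLeastLessThan_iff less_imp_le not_le)
    then show ?thesis using False catw_dips_below_zero[of i u 0] by simp
  qed (simp add: catw_prod False)
qed

lemma lookup_Cat: "Poly_Mapping.lookup (Cat q n) = deg_part n (catw q 0)"
proof
  fix u
  have "catalan u \<Longrightarrow> length u = 2 * n \<longleftrightarrow> nX u = n"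
    using length_nX_height[of u] by (auto simp: catalan_def height_conv_nth)
  then show "Poly_Mapping.lookup (Cat q n) u = deg_part n (catw q 0) u"
    by (auto simp: lookup_Cat_eq deg_part_def catw_zero_catalan)
qed

lemma lookup_xvy_Cat: "Poly_Mapping.lookup (xvy (Cat q n)) = deg_part (Suc n) (xCy q)"
  by (simp add: lookup_xvy lookup_Cat deg_part_caty deg_part_xcat xCy_def)

end

lemma qint_nonzero:
  fixes q :: "'f::field"
  assumes q: "q \<noteq> 0" and not_root: "\<And>n::nat. 0 < n \<Longrightarrow> q ^ n \<noteq> 1" and "0 < n"
  shows "qint q n \<noteq> 0"
proof
  assume zero: "qint q n = 0"
  have "q - inverse q \<noteq> 0"
    using q not_root[of 2] by (auto simp: field_simps power2_eq_square)
  with zero have "q ^ nat n = inverse (q ^ nat n)"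
    using \<open>0 < n\<close> by (simp add: qint_def power_int_minus power_int_nonneg_exp)
  then have "q ^ (2 * nat n) = 1"
    using q by (simp add: power_mult power2_eq_square field_simps)
  with not_root[of "2 * nat n"] \<open>0 < n\<close> show False
    by simp
qed

theorem lemma7p2:
  fixes q :: "'f::field_char_0" and k :: nat
  assumes "q \<noteq> 0"
    and "\<And>n::nat. n > 0 \<Longrightarrow> q ^ n \<noteq> 1"
  shows "xvy (Cat q k) \<in> Ualg q"
proof -
  interpret qgeneric q
    using qint_nonzero[OF assms] by unfold_locales
  have "Poly_Mapping.lookup (xvy (Cat q k)) \<in> Useries q"
    using deg_parts_in_Useries[of "Suc k"] by (simp add: lookup_xvy_Cat)
  then show ?thesis
    by (auto simp: Useries_def)
qed

end
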